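(* Let $(\Lambda,\mathcal{G}_\Lambda)$ and $(\Xi,\mathcal{G}_\Xi)$ be labeled graphs whose vertex groups are all directly-indecomposable cyclic groups. Then $(\Lambda,\mathcal{G}_\Lambda)\cong(\Xi,\mathcal{G}_\Xi)$ (as labeled graphs) if and only if their $T_0$-quotients satisfy $(\Lambda_0,\mathcal{G}_{\Lambda_0})\cong(\Xi_0,\mathcal{G}_{\Xi_0})$ (as labeled graphs).
   Context: A labeled graph $(\Lambda,\mathcal{G}_\Lambda)$ consists of a nonempty finite simplicial graph $\Lambda$ with vertex set $V_\Lambda$ and a family $\mathcal{G}_\Lambda=\{G_v\}_{v\in V_\Lambda}$ of nontrivial groups. A labeled-graph isomorphism $(\Gamma,\mathcal{G}_\Gamma)\to(\Sigma,\mathcal{G}_\Sigma)$ is a bijection $f:V_\Gamma\to V_\Sigma$ such that $u,v$ are adjacent in $\Gamma$ iff $f(u),f(v)$ are adjacent in $\Sigma$, and $G_u\cong G_{f(u)}$ for every $u\in V_\Gamma$. A cyclic group is primary if it has prime-power order, and directly-indecomposable if it is infinite or primary. $\mathrm{MCS}(\Lambda)$ denotes the set of maximal complete subgraphs of $\Lambda$. Define $u\sim_\Lambda v$ iff for every $\Theta\in\mathrm{MCS}(\Lambda)$, $u\in\Theta\Leftrightarrow v\in\Theta$; write $\tilde u$ for the class of $u$. The $T_0$-quotient $\Lambda_0$ is the graph whose vertices are the $\sim_\Lambda$-classes, with $\tilde u,\tilde v$ adjacent iff $u,v$ are adjacent in $\Lambda$ and $u\not\sim_\Lambda v$. The $T_0$-quotient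 of $(\Lambda,\mathcal{G}_\Lambda)$ is $(\Lambda_0,\mathcal{G}_{\Lambda_0})$ with $G_{\tilde u}:=\prod_{v\in\tilde u}G_v$ (direct product). *)

theory Defs
  imports "HOL-Algebra.Algebra" "HOL-Computational_Algebra.Primes"
begin

definition simple_graph :: "'a set \<Rightarrow> ('a \<Rightarrow> 'a \<Rightarrow> bool) \<Rightarrow> bool" where
  "simple_graph V E \<longleftrightarrow> finite V \<and> V \<noteq> {} \<and>
     (\<forall>u v. E u v \<longrightarrow> u \<in> V \<and> v \<in> V \<and> u \<noteq> v \<and> E v u)"

definition labeled_graph :: "'a set \<Rightarrow> ('a \<Rightarrow> 'a \<Rightarrow> bool) \<Rightarrow> ('a \<Rightarrow> ('g, 'm) monoid_scheme) \<Rightarrow> bool" where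
  "labeled_graph V E G \<longleftrightarrow> simple_graph V E \<and>
     (\<forall>v\<in>V. group (G v) \<and> carrier (G v) \<noteq> {\<one>\<^bsub>G v\<^esub>})"

definition lg_iso ::
  "'a set \<Rightarrow> ('a \<Rightarrow> 'a \<Rightarrow> bool) \<Rightarrow> ('a \<Rightarrow> ('g, 'm) monoid_scheme) \<Rightarrow>
   'b set \<Rightarrow> ('b \<Rightarrow> 'b \<Rightarrow> bool) \<Rightarrow> ('b \<Rightarrow> ('h, 'n) monoid_scheme) \<Rightarrow> bool" where
  "lg_iso V E G W F H \<longleftrightarrow>
     (\<exists>f. bij_betw f V W \<and> (\<forall>u\<in>V. \<forall>v\<in>V. E u v \<longleftrightarrow> F (f u) (f v)) \<and>
          (\<forall>u\<in>V. G u \<cong> H (f u)))"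

definition dir_indec_cyclic :: "('g, 'm) monoid_scheme \<Rightarrow> bool" where
  "dir_indec_cyclic G \<longleftrightarrow> group G \<and> cyclic_group G \<and>
     (infinite (carrier G) \<or> (\<exists>p k. Factorial_Ring.prime (p::nat) \<and> k \<ge> 1 \<and> card (carrier G) = p ^ k))"

definition complete_sub :: "'a set \<Rightarrow> ('a \<Rightarrow> 'a \<Rightarrow> bool) \<Rightarrow> 'a set \<Rightarrow> bool" where
  "complete_sub V E S \<longleftrightarrow> S \<subseteq> V \<and> (\<forall>u\<in>S. \<forall>v\<in>S. u \<noteq> v \<longrightarrow> E u v)"

definition MCS :: "'a set \<Rightarrow> ('a \<Rightarrow> 'a \<Rightarrow> bool) \<Rightarrow> 'a set set" where
  "MCS V E = {S. complete_sub V E S \<and> (\<forall>T. complete_sub V E T \<and> S \<subseteq> T \<longrightarrow> T = S)}"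

definition T0_rel :: "'a set \<Rightarrow> ('a \<Rightarrow> 'a \<Rightarrow> bool) \<Rightarrow> 'a \<Rightarrow> 'a \<Rightarrow> bool" where
  "T0_rel V E u v \<longleftrightarrow> (\<forall>\<Theta>\<in>MCS V E. u \<in> \<Theta> \<longleftrightarrow> v \<in> \<Theta>)"

definition T0_class :: "'a set \<Rightarrow> ('a \<Rightarrow> 'a \<Rightarrow> bool) \<Rightarrow> 'a \<Rightarrow> 'a set" where
  "T0_class V E u = {v \<in> V. T0_rel V E u v}"

definition T0_verts :: "'a set \<Rightarrow> ('a \<Rightarrow> 'a \<Rightarrow> bool) \<Rightarrow> 'a set set" where
  "T0_verts V E = T0_class V E ` V"

definition T0_adj :: "'a set \<Rightarrow> ('a \<Rightarrow> 'a \<Rightarrow> bool) \<Rightarrow> 'a set \<Rightarrow> 'a set \<Rightarrow> bool" where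
  "T0_adj V E A B \<longleftrightarrow> (\<exists>u\<in>V. \<exists>v\<in>V. A = T0_class V E u \<and> B = T0_class V E v \<and>
       E u v \<and> \<not> T0_rel V E u v)"

definition T0_labels :: "('a \<Rightarrow> ('g, 'm) monoid_scheme) \<Rightarrow> 'a set \<Rightarrow> ('a \<Rightarrow> 'g) monoid" where
  "T0_labels G A = product_group A G"

end

theory Submission
  imports Defs
begin

(* Forward: a graph isomorphism f maps maximal complete subgraphs onto maximal complete
   subgraphs, hence preserves ~ and maps T0-classes onto T0-classes; the induced map on
   classes is an isomorphism of the quotients, and the class labels, being direct products,
   correspond by reindexing along f.  This direction needs no hypothesis on the groups.

   Backward: every vertex group is Z/nZ with n a prime power, or n = 0 for Z.  For a finite
   product K of such groups the number of cosets of the m-th powers, |K/K^m| = prod gcd(m, n_v),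
   is an isomorphism invariant, and these numbers for all m > 0 determine how often each n
   occurs among the factors.  So isomorphic class labels give order-preserving bijections
   between corresponding classes, and gluing them along the quotient isomorphism gives a
   graph isomorphism: a class induces a complete subgraph, and adjacency between different
   classes is read off the quotient. *)

definition graph_iso ::
  "'a set \<Rightarrow> ('a \<Rightarrow> 'a \<Rightarrow> bool) \<Rightarrow> 'b set \<Rightarrow> ('b \<Rightarrow> 'b \<Rightarrow> bool) \<Rightarrow> ('a \<Rightarrow> 'b) \<Rightarrow> bool" where
  "graph_iso V E W F f \<longleftrightarrow> bij_betw f V W \<and> (\<forall>u\<in>V. \<forall>v\<in>V. E u v \<longleftrightarrow> F (f u) (f v))"

lemma lg_iso_iff_graph_iso:
  "lg_iso V E G W F H \<longleftrightarrow> (\<exists>f. graph_iso V E W F f \<and> (\<forall>u\<in>V. G u \<cong> H (f u)))"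
  unfolding lg_iso_def graph_iso_def by blast

lemma labeled_graphD:
  assumes "labeled_graph V E G"
  shows "simple_graph V E" and "finite V" and "\<And>v. v \<in> V \<Longrightarrow> group (G v)"
  using assms by (auto simp: labeled_graph_def simple_graph_def)

lemma MCS_sub: "\<Theta> \<in> MCS V E \<Longrightarrow> \<Theta> \<subseteq> V"
  by (simp add: MCS_def complete_sub_def)

lemma complete_sub_in_MCS:
  assumes V: "finite V" and S: "complete_sub V E S"
  shows "\<exists>\<Theta>\<in>MCS V E. S \<subseteq> \<Theta>"
proof -
  define C where "C = {T. complete_sub V E T \<and> S \<subseteq> T}"
  have "C \<subseteq> Pow V" by (auto simp: C_def complete_sub_def)
  then have "finite C" using V finite_subset by blast
  moreover have "S \<in> C" using S by (simp add: C_def)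
  ultimately obtain \<Theta> where \<Theta>: "\<Theta> \<in> C" and "\<forall>T\<in>C. \<Theta> \<subseteq> T \<longrightarrow> \<Theta> = T"
    using finite_has_maximal by blast
  then have "\<Theta> \<in> MCS V E" unfolding MCS_def C_def by auto
  then show ?thesis using \<Theta> unfolding C_def by blast
qed

lemma adj_common_MCS:
  assumes g: "simple_graph V E" and e: "E u v"
  shows "\<exists>\<Theta>\<in>MCS V E. u \<in> \<Theta> \<and> v \<in> \<Theta>"
proof -
  have "complete_sub V E {u, v}" using g e by (auto simp: complete_sub_def simple_graph_def)
  then show ?thesis using complete_sub_in_MCS g by (fastforce simp: simple_graph_def)
qed

(* Vertices u ~ v lie in the same maximal complete subgraphs; every vertex lies in one,
   so distinct ~-related vertices are adjacent: a T0-class induces a complete subgraph. *)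
lemma T0_rel_adj_iff:
  assumes g: "simple_graph V E" and u: "u \<in> V" and v: "v \<in> V" and r: "T0_rel V E u v"
  shows "E u v \<longleftrightarrow> u \<noteq> v"
proof
  assume "u \<noteq> v"
  have "complete_sub V E {u}" using u by (simp add: complete_sub_def)
  then obtain \<Theta> where \<Theta>: "\<Theta> \<in> MCS V E" "u \<in> \<Theta>"
    using complete_sub_in_MCS g by (force simp: simple_graph_def)
  then have "v \<in> \<Theta>" using r by (simp add: T0_rel_def)
  then show "E u v" using \<Theta> \<open>u \<noteq> v\<close> by (auto simp: MCS_def complete_sub_def)
next
  assume "E u v"
  then show "u \<noteq> v" using g unfolding simple_graph_def by blast
qed

lemma T0_rel_refl: "T0_rel V E u u"
  and T0_rel_sym: "T0_rel V E u v \<Longrightarrow> T0_rel V E v u"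
  and T0_rel_trans: "T0_rel V E u v \<Longrightarrow> T0_rel V E v w \<Longrightarrow> T0_rel V E u w"
  by (simp_all add: T0_rel_def)

lemma T0_class_mem: "u \<in> V \<Longrightarrow> u \<in> T0_class V E u"
  by (simp add: T0_class_def T0_rel_refl)

lemma T0_class_eq_iff: "u \<in> V \<Longrightarrow> v \<in> V \<Longrightarrow> T0_class V E u = T0_class V E v \<longleftrightarrow> T0_rel V E u v"
  unfolding T0_class_def by (auto simp: set_eq_iff intro: T0_rel_trans T0_rel_sym T0_rel_refl)

lemma T0_class_of_mem: "v \<in> T0_class V E u \<Longrightarrow> T0_class V E v = T0_class V E u"
  unfolding T0_class_def by (auto intro: T0_rel_trans T0_rel_sym)

lemma T0_verts_sub: "A \<in> T0_verts V E \<Longrightarrow> A \<subseteq> V"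
  by (auto simp: T0_verts_def T0_class_def)

lemma T0_adj_char:
  assumes g: "simple_graph V E" and u: "u \<in> V" and v: "v \<in> V"
  shows "T0_adj V E (T0_class V E u) (T0_class V E v) \<longleftrightarrow> E u v \<and> \<not> T0_rel V E u v"
proof
  assume "T0_adj V E (T0_class V E u) (T0_class V E v)"
  then obtain u' v' where "u' \<in> V" "v' \<in> V" and ru: "T0_rel V E u u'" and rv: "T0_rel V E v v'"
    and e: "E u' v'" and nr: "\<not> T0_rel V E u' v'"
    unfolding T0_adj_def using T0_class_eq_iff[OF u] T0_class_eq_iff[OF v] by blast
  have nuv: "\<not> T0_rel V E u v" using ru rv nr unfolding T0_rel_def by blast
  obtain \<Theta> where "\<Theta> \<in> MCS V E" "u' \<in> \<Theta>" "v' \<in> \<Theta>" using adj_common_MCS[OF g e] by blast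
  then have "u \<in> \<Theta>" "v \<in> \<Theta>" "complete_sub V E \<Theta>" using ru rv by (auto simp: T0_rel_def MCS_def)
  moreover have "u \<noteq> v" using nuv by (auto simp: T0_rel_def)
  ultimately show "E u v \<and> \<not> T0_rel V E u v" using nuv by (auto simp: complete_sub_def)
qed (use u v in \<open>auto simp: T0_adj_def\<close>)

lemma graph_iso_complete_sub:
  assumes iso: "graph_iso V E W F f" and S: "S \<subseteq> V"
  shows "complete_sub W F (f ` S) \<longleftrightarrow> complete_sub V E S"
proof -
  have "inj_on f V" and "f ` V = W" using iso by (auto simp: graph_iso_def bij_betw_def)
  then have "\<forall>a\<in>S. \<forall>b\<in>S. f a \<noteq> f b \<longleftrightarrow> a \<noteq> b" and "f ` S \<subseteq> W"
    using S by (auto dest: inj_onD)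
  moreover have "\<forall>a\<in>S. \<forall>b\<in>S. F (f a) (f b) \<longleftrightarrow> E a b" using iso S by (auto simp: graph_iso_def)
  ultimately show ?thesis using S unfolding complete_sub_def by auto
qed

(* ... and hence, being an order isomorphism of vertex subsets, maximal ones to maximal ones. *)
lemma graph_iso_MCS:
  assumes iso: "graph_iso V E W F f" and S: "S \<subseteq> V"
  shows "f ` S \<in> MCS W F \<longleftrightarrow> S \<in> MCS V E"
proof -
  have inj: "inj_on f V" and fV: "f ` V = W" using iso by (auto simp: graph_iso_def bij_betw_def)
  have complete: "\<And>T. T \<subseteq> V \<Longrightarrow> complete_sub W F (f ` T) \<longleftrightarrow> complete_sub V E T"
    by (rule graph_iso_complete_sub[OF iso])
  have "(\<forall>T. complete_sub W F T \<and> f ` S \<subseteq> T \<longrightarrow> T = f ` S) \<longleftrightarrow>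
        (\<forall>T. complete_sub V E T \<and> S \<subseteq> T \<longrightarrow> T = S)"
  proof
    assume maxW: "\<forall>T. complete_sub W F T \<and> f ` S \<subseteq> T \<longrightarrow> T = f ` S"
    show "\<forall>T. complete_sub V E T \<and> S \<subseteq> T \<longrightarrow> T = S"
    proof (intro allI impI)
      fix T assume T: "complete_sub V E T \<and> S \<subseteq> T"
      then have "T \<subseteq> V" by (simp add: complete_sub_def)
      then have "f ` T = f ` S" using maxW complete T by blast
      then show "T = S" using inj S \<open>T \<subseteq> V\<close> by (simp add: inj_on_image_eq_iff)
    qed
  next
    assume maxV: "\<forall>T. complete_sub V E T \<and> S \<subseteq> T \<longrightarrow> T = S"
    show "\<forall>T. complete_sub W F T \<and> f ` S \<subseteq> T \<longrightarrow> T = f ` S"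
    proof (intro allI impI)
      fix T assume T: "complete_sub W F T \<and> f ` S \<subseteq> T"
      then have "T \<subseteq> f ` V" using fV by (simp add: complete_sub_def)
      then obtain T' where T': "T' \<subseteq> V" "T = f ` T'" by (auto simp: subset_image_iff)
      then have "S \<subseteq> T'" using inj_on_image_mem_iff[OF inj _ T'(1)] T S by blast
      then show "T = f ` S" using maxV complete T T' by blast
    qed
  qed
  then show ?thesis unfolding MCS_def using complete[OF S] by simp
qed

lemma graph_iso_MCS_image:
  assumes iso: "graph_iso V E W F f"
  shows "MCS W F = image f ` MCS V E"
proof
  show "image f ` MCS V E \<subseteq> MCS W F"
  proof (rule image_subsetI)
    fix S assume "S \<in> MCS V E"
    then show "f ` S \<in> MCS W F" using graph_iso_MCS[OF iso MCS_sub] by blast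
  qed
  show "MCS W F \<subseteq> image f ` MCS V E"
  proof
    fix \<Theta> assume \<Theta>: "\<Theta> \<in> MCS W F"
    have "f ` V = W" using iso by (simp add: graph_iso_def bij_betw_def)
    then have "\<Theta> \<subseteq> f ` V" using MCS_sub[OF \<Theta>] by simp
    then obtain S where S: "S \<subseteq> V" "\<Theta> = f ` S" by (auto simp: subset_image_iff)
    then have "S \<in> MCS V E" using graph_iso_MCS[OF iso S(1)] \<Theta> by simp
    then show "\<Theta> \<in> image f ` MCS V E" using S(2) by blast
  qed
qed

lemma graph_iso_T0_rel:
  assumes iso: "graph_iso V E W F f" and u: "u \<in> V" and v: "v \<in> V"
  shows "T0_rel W F (f u) (f v) \<longleftrightarrow> T0_rel V E u v"
proof -
  have inj: "inj_on f V" using iso by (simp add: graph_iso_def bij_betw_def)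
  have "(f u \<in> f ` \<Theta> \<longleftrightarrow> u \<in> \<Theta>) \<and> (f v \<in> f ` \<Theta> \<longleftrightarrow> v \<in> \<Theta>)" if "\<Theta> \<in> MCS V E" for \<Theta>
    using inj_on_image_mem_iff[OF inj u MCS_sub[OF that]] inj_on_image_mem_iff[OF inj v MCS_sub[OF that]]
    by blast
  then show ?thesis unfolding T0_rel_def graph_iso_MCS_image[OF iso] by auto
qed

lemma graph_iso_T0_class:
  assumes iso: "graph_iso V E W F f" and u: "u \<in> V"
  shows "f ` T0_class V E u = T0_class W F (f u)"
proof -
  have rel: "\<And>v. v \<in> V \<Longrightarrow> T0_rel W F (f u) (f v) \<longleftrightarrow> T0_rel V E u v"
    using graph_iso_T0_rel[OF iso u] by blast
  have "T0_class W F (f u) = {w \<in> f ` V. T0_rel W F (f u) w}"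
    using iso by (simp add: T0_class_def graph_iso_def bij_betw_def)
  also have "\<dots> = f ` {v \<in> V. T0_rel W F (f u) (f v)}" by blast
  also have "\<dots> = f ` T0_class V E u" unfolding T0_class_def using rel by blast
  finally show ?thesis by simp
qed

lemma graph_iso_T0_quotient:
  assumes gV: "simple_graph V E" and gW: "simple_graph W F" and iso: "graph_iso V E W F f"
  shows "graph_iso (T0_verts V E) (T0_adj V E) (T0_verts W F) (T0_adj W F) (image f)"
  unfolding graph_iso_def bij_betw_def
proof (intro conjI ballI)
  have inj: "inj_on f V" and fV: "f ` V = W" using iso by (auto simp: graph_iso_def bij_betw_def)
  show "inj_on (image f) (T0_verts V E)"
  proof (rule inj_onI)
    fix A B assume A: "A \<in> T0_verts V E" and B: "B \<in> T0_verts V E" and eq: "f ` A = f ` B"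
    show "A = B" using inj_on_image_eq_iff[OF inj T0_verts_sub[OF A] T0_verts_sub[OF B]] eq by blast
  qed
  have "image f ` T0_verts V E = (\<lambda>u. T0_class W F (f u)) ` V"
    unfolding T0_verts_def image_image using graph_iso_T0_class[OF iso] by (rule image_cong[OF refl])
  also have "\<dots> = T0_verts W F" unfolding T0_verts_def fV[symmetric] image_image ..
  finally show "image f ` T0_verts V E = T0_verts W F" .
  fix A B assume "A \<in> T0_verts V E" "B \<in> T0_verts V E"
  then obtain u v where u: "u \<in> V" and v: "v \<in> V" and A: "A = T0_class V E u" and B: "B = T0_class V E v"
    unfolding T0_verts_def by blast
  have fu: "f u \<in> W" and fv: "f v \<in> W" using fV u v by blast+
  have "E u v \<longleftrightarrow> F (f u) (f v)" using iso u v unfolding graph_iso_def by blast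
  moreover have "T0_rel V E u v \<longleftrightarrow> T0_rel W F (f u) (f v)" using graph_iso_T0_rel[OF iso u v] by blast
  ultimately show "T0_adj V E A B \<longleftrightarrow> T0_adj W F (f ` A) (f ` B)"
    unfolding A B graph_iso_T0_class[OF iso u] graph_iso_T0_class[OF iso v]
      T0_adj_char[OF gV u v] T0_adj_char[OF gW fu fv] by blast
qed

(* Conversely, an isomorphism Phi of T0-quotients together with bijections h A : A -> Phi A
   on each class glue to the vertex map v |-> h [v] v, which sends the class of v onto Phi [v]. *)
lemma glued_map_class:
  assumes \<Phi>: "bij_betw \<Phi> (T0_verts V E) (T0_verts W F)"
    and h: "\<And>A. A \<in> T0_verts V E \<Longrightarrow> bij_betw (h A) A (\<Phi> A)" and v: "v \<in> V"
  shows "h (T0_class V E v) v \<in> W" and "T0_class W F (h (T0_class V E v) v) = \<Phi> (T0_class V E v)"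
proof -
  have A: "T0_class V E v \<in> T0_verts V E" using v by (simp add: T0_verts_def)
  then have hv: "h (T0_class V E v) v \<in> \<Phi> (T0_class V E v)"
    using bij_betwE[OF h[OF A]] T0_class_mem[OF v] by blast
  obtain w where "w \<in> W" and w: "\<Phi> (T0_class V E v) = T0_class W F w"
    using bij_betwE[OF \<Phi>] A unfolding T0_verts_def by blast
  then show "h (T0_class V E v) v \<in> W" using hv T0_verts_sub[of _ W F] A bij_betwE[OF \<Phi>] by blast
  show "T0_class W F (h (T0_class V E v) v) = \<Phi> (T0_class V E v)"
    using hv unfolding w by (rule T0_class_of_mem)
qed

(* The glued map is a bijection, since the classes partition V and W. *)
lemma glued_map_bij:
  assumes \<Phi>: "bij_betw \<Phi> (T0_verts V E) (T0_verts W F)"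
    and h: "\<And>A. A \<in> T0_verts V E \<Longrightarrow> bij_betw (h A) A (\<Phi> A)"
  shows "bij_betw (\<lambda>v. h (T0_class V E v) v) V W"
  unfolding bij_betw_def
proof (intro conjI inj_onI subset_antisym subsetI)
  fix u v assume u: "u \<in> V" and v: "v \<in> V" and eq: "h (T0_class V E u) u = h (T0_class V E v) v"
  have "\<Phi> (T0_class V E u) = \<Phi> (T0_class V E v)"
    using glued_map_class(2)[OF \<Phi> h u] glued_map_class(2)[OF \<Phi> h v] eq by simp
  then have cls: "T0_class V E u = T0_class V E v"
    using bij_betw_imp_inj_on[OF \<Phi>] u v by (auto simp: T0_verts_def dest: inj_onD)
  have "v \<in> T0_class V E u" and "u \<in> T0_class V E u" using cls T0_class_mem u v by metis+
  moreover have "T0_class V E u \<in> T0_verts V E" using u by (simp add: T0_verts_def)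
  ultimately show "u = v" using bij_betw_imp_inj_on[OF h] eq cls by (metis inj_onD)
next
  fix w assume "w \<in> (\<lambda>v. h (T0_class V E v) v) ` V"
  then show "w \<in> W" using glued_map_class(1)[OF \<Phi> h] by blast
next
  fix w assume w: "w \<in> W"
  then have "T0_class W F w \<in> \<Phi> ` T0_verts V E"
    using bij_betw_imp_surj_on[OF \<Phi>] by (simp add: T0_verts_def)
  then obtain A where A: "A \<in> T0_verts V E" and "\<Phi> A = T0_class W F w" by blast
  then have "w \<in> h A ` A" using bij_betw_imp_surj_on[OF h[OF A]] T0_class_mem[OF w] by simp
  then obtain v where v: "v \<in> A" and "h A v = w" by blast
  moreover obtain x where "A = T0_class V E x" using A unfolding T0_verts_def by blast
  then have "T0_class V E v = A" using T0_class_of_mem v by metis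
  ultimately show "w \<in> (\<lambda>v. h (T0_class V E v) v) ` V" using T0_verts_sub[OF A] by blast
qed

(* The glued map is a graph isomorphism: inside a class both graphs are complete (by
   T0_rel_adj_iff), and between classes adjacency is read off the quotient (by T0_adj_char). *)
lemma glued_map_graph_iso:
  assumes gV: "simple_graph V E" and gW: "simple_graph W F"
    and \<Phi>: "graph_iso (T0_verts V E) (T0_adj V E) (T0_verts W F) (T0_adj W F) \<Phi>"
    and h: "\<And>A. A \<in> T0_verts V E \<Longrightarrow> bij_betw (h A) A (\<Phi> A)"
  shows "graph_iso V E W F (\<lambda>v. h (T0_class V E v) v)"
proof -
  define g where "g v = h (T0_class V E v) v" for v
  have \<Phi>bij: "bij_betw \<Phi> (T0_verts V E) (T0_verts W F)" using \<Phi> by (simp add: graph_iso_def)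
  have bij: "bij_betw g V W" unfolding g_def by (rule glued_map_bij[OF \<Phi>bij h])
  have g_in_W: "g v \<in> W" and cls: "T0_class W F (g v) = \<Phi> (T0_class V E v)" if "v \<in> V" for v
    unfolding g_def using glued_map_class[OF \<Phi>bij h that] by blast+
  have clsV: "T0_class V E v \<in> T0_verts V E" if "v \<in> V" for v using that by (simp add: T0_verts_def)
  have "E u v \<longleftrightarrow> F (g u) (g v)" if u: "u \<in> V" and v: "v \<in> V" for u v
  proof -
    have rel: "T0_rel W F (g u) (g v) \<longleftrightarrow> T0_rel V E u v"
    proof -
      have "T0_rel W F (g u) (g v) \<longleftrightarrow> \<Phi> (T0_class V E u) = \<Phi> (T0_class V E v)"
        using T0_class_eq_iff[where E = F, OF g_in_W[OF u] g_in_W[OF v]] cls[OF u] cls[OF v] by simp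
      also have "\<dots> \<longleftrightarrow> T0_class V E u = T0_class V E v"
        using bij_betw_imp_inj_on[OF \<Phi>bij] clsV[OF u] clsV[OF v] by (auto dest: inj_onD)
      finally show ?thesis using T0_class_eq_iff[OF u v] by simp
    qed
    show ?thesis
    proof (cases "T0_rel V E u v")
      case True
      have "u = v \<longleftrightarrow> g u = g v" using bij_betw_imp_inj_on[OF bij] u v by (auto dest: inj_onD)
      then show ?thesis
        using T0_rel_adj_iff[OF gV u v True] T0_rel_adj_iff[OF gW g_in_W[OF u] g_in_W[OF v]] rel True by simp
    next
      case False
      have "E u v \<longleftrightarrow> T0_adj V E (T0_class V E u) (T0_class V E v)"
        using T0_adj_char[OF gV u v] False by simp
      also have "\<dots> \<longleftrightarrow> T0_adj W F (\<Phi> (T0_class V E u)) (\<Phi> (T0_class V E v))"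
        using \<Phi> clsV[OF u] clsV[OF v] by (simp add: graph_iso_def)
      also have "\<dots> \<longleftrightarrow> F (g u) (g v)"
        using T0_adj_char[OF gW g_in_W[OF u] g_in_W[OF v]] cls[OF u] cls[OF v] rel False by simp
      finally show ?thesis .
    qed
  qed
  then show ?thesis using bij unfolding graph_iso_def g_def by blast
qed

(* A group generated by g is isomorphic to Z/(ord g)Z via k |-> g^k (ord g = 0 if g has
   infinite order). *)
lemma (in group) int_pow_iso_integer_mod_group:
  assumes g: "g \<in> carrier G" and gen: "carrier G = range (\<lambda>k::int. g [^] k)"
  shows "(\<lambda>k. g [^] k) \<in> iso (integer_mod_group (ord g)) G"
proof -
  define n where "n = ord g"
  have pow_eq: "g [^] a = g [^] b \<longleftrightarrow> int n dvd b - a" for a b :: int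
    unfolding n_def by (rule int_pow_eq[OF g])
  have pow_mod: "g [^] (k mod int n) = g [^] k" for k :: int
    using pow_eq dvd_minus_mod by blast
  have residue: "a \<in> carrier (integer_mod_group n) \<Longrightarrow> a mod int n = a" for a :: int
    by (cases "n = 0") (auto simp: carrier_integer_mod_group)
  have "(\<lambda>k. g [^] k) \<in> iso (integer_mod_group n) G"
  proof (rule isoI)
    show "(\<lambda>k. g [^] k) \<in> hom (integer_mod_group n) G"
      by (rule homI) (simp_all add: g pow_mod int_pow_mult)
    have "inj_on (\<lambda>k. g [^] k) (carrier (integer_mod_group n))"
    proof (rule inj_onI)
      fix a b assume "a \<in> carrier (integer_mod_group n)" "b \<in> carrier (integer_mod_group n)"
        and "g [^] a = g [^] b"
      then show "a = b" using residue pow_eq mod_eq_dvd_iff by metis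
    qed
    moreover have "(\<lambda>k. g [^] k) ` carrier (integer_mod_group n) = carrier G"
    proof
      show "(\<lambda>k. g [^] k) ` carrier (integer_mod_group n) \<subseteq> carrier G" using g by auto
      have "g [^] k \<in> (\<lambda>k. g [^] k) ` carrier (integer_mod_group n)" for k :: int
        using pow_mod[of k] by (intro image_eqI[of _ _ "k mod int n"]) (auto simp: carrier_integer_mod_group)
      then show "carrier G \<subseteq> (\<lambda>k. g [^] k) ` carrier (integer_mod_group n)" using gen by auto
    qed
    ultimately show "bij_betw (\<lambda>k. g [^] k) (carrier (integer_mod_group n)) (carrier G)"
      by (simp add: bij_betw_def)
  qed
  then show ?thesis by (simp add: n_def)
qed

(* Hence a cyclic group is isomorphic to Z/nZ with n its order, where an infinite cyclic
   group (card = 0) is isomorphic to Z = Z/0Z. *)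
lemma cyclic_iso_integer_mod_group:
  fixes G (structure)
  assumes G: "group G" and cyc: "cyclic_group G"
  shows "integer_mod_group (card (carrier G)) \<cong> G"
proof -
  interpret group G by (rule G)
  obtain g where "g \<in> carrier G" and "carrier G = range (\<lambda>k::int. g [^] k)"
    using cyc cyclic_group by blast
  then have iso: "integer_mod_group (ord g) \<cong> G"
    using int_pow_iso_integer_mod_group by (auto simp: is_iso_def)
  have "card (carrier G) = ord g"
  proof (cases "ord g = 0")
    case True
    then have "infinite (carrier G)" using iso_finite[OF iso] by (simp add: carrier_integer_mod_group)
    then show ?thesis using True by simp
  next
    case False
    then show ?thesis using iso_same_card[OF iso] by (simp add: carrier_integer_mod_group)
  qed
  then show ?thesis using iso by simp
qed

lemma product_group_reindex_iso:
  fixes f :: "'a \<Rightarrow> 'c" and H :: "'c \<Rightarrow> ('h, 'n) monoid_scheme"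
  assumes inj: "inj_on f A"
  shows "product_group A (\<lambda>a. H (f a)) \<cong> product_group (f ` A) H"
proof -
  define r where "r x = (\<lambda>w\<in>f ` A. x (inv_into A f w))" for x :: "'a \<Rightarrow> 'h"
  define s where "s y = (\<lambda>a\<in>A. y (f a))" for y :: "'c \<Rightarrow> 'h"
  have inv_in: "\<And>w. w \<in> f ` A \<Longrightarrow> inv_into A f w \<in> A" by (rule inv_into_into)
  have f_inv: "\<And>w. w \<in> f ` A \<Longrightarrow> f (inv_into A f w) = w" by (rule f_inv_into_f)
  have inv_f: "\<And>a. a \<in> A \<Longrightarrow> inv_into A f (f a) = a" using inj by simp
  have r_carrier: "r x \<in> carrier (product_group (f ` A) H)"
    if "x \<in> carrier (product_group A (\<lambda>a. H (f a)))" for x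
    using that inv_in f_inv by (fastforce simp: r_def PiE_iff)
  have "r \<in> iso (product_group A (\<lambda>a. H (f a))) (product_group (f ` A) H)"
  proof (rule isoI)
    show "r \<in> hom (product_group A (\<lambda>a. H (f a))) (product_group (f ` A) H)"
      by (rule homI) (auto simp: r_carrier r_def inv_in f_inv inv_f intro!: restrict_ext)
    show "bij_betw r (carrier (product_group A (\<lambda>a. H (f a)))) (carrier (product_group (f ` A) H))"
    proof (rule bij_betw_byWitness[where f' = s])
      show "\<forall>x\<in>carrier (product_group A (\<lambda>a. H (f a))). s (r x) = x"
        by (auto simp: s_def r_def inv_f PiE_iff intro!: extensionalityI[of _ A])
      show "\<forall>y\<in>carrier (product_group (f ` A) H). r (s y) = y"
        by (auto simp: s_def r_def inv_in f_inv PiE_iff intro!: extensionalityI[of _ "f ` A"])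
      show "r ` carrier (product_group A (\<lambda>a. H (f a))) \<subseteq> carrier (product_group (f ` A) H)"
        using r_carrier by blast
      show "s ` carrier (product_group (f ` A) H) \<subseteq> carrier (product_group A (\<lambda>a. H (f a)))"
        by (auto simp: s_def PiE_iff)
    qed
  qed
  then show ?thesis by (auto simp: is_iso_def)
qed

(* The relation x in y K^m, i.e. x and y lie in the same coset of the m-th powers. For abelian
   K its classes form K / K^m; the number of classes is an isomorphism invariant. *)
definition pow_coset_rel :: "('g, 'm) monoid_scheme \<Rightarrow> nat \<Rightarrow> ('g \<times> 'g) set" where
  "pow_coset_rel K m =
     {(x, y). x \<in> carrier K \<and> y \<in> carrier K \<and> (\<exists>z\<in>carrier K. x = y \<otimes>\<^bsub>K\<^esub> z [^]\<^bsub>K\<^esub> m)}"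

lemma card_quotient_by_fibres:
  assumes "R \<subseteq> A \<times> A" and "\<And>x y. x \<in> A \<Longrightarrow> y \<in> A \<Longrightarrow> (x, y) \<in> R \<longleftrightarrow> g x = g y"
  shows "card (A // R) = card (g ` A)"
proof -
  define fibre where "fibre b = {x\<in>A. g x = b}" for b
  have "R `` {x} = fibre (g x)" if "x \<in> A" for x
    using assms that unfolding fibre_def by auto
  then have "A // R = fibre ` g ` A" unfolding quotient_def by auto
  moreover have "inj_on fibre (g ` A)" unfolding fibre_def by (rule inj_onI) blast
  ultimately show ?thesis by (simp add: card_image)
qed

lemma pow_coset_rel_iso:
  assumes K: "group K" and C: "group C" and \<phi>: "\<phi> \<in> iso K C"
    and x: "x \<in> carrier K" and y: "y \<in> carrier K"
  shows "(x, y) \<in> pow_coset_rel K m \<longleftrightarrow> (\<phi> x, \<phi> y) \<in> pow_coset_rel C m"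
proof -
  interpret h: group_hom K C \<phi>
    using K C \<phi> by (simp add: group_hom_def group_hom_axioms_def iso_imp_homomorphism)
  have inj: "inj_on \<phi> (carrier K)" and surj: "\<phi> ` carrier K = carrier C"
    using \<phi> by (auto simp: iso_iff)
  have image: "\<phi> (y \<otimes>\<^bsub>K\<^esub> z [^]\<^bsub>K\<^esub> m) = \<phi> y \<otimes>\<^bsub>C\<^esub> \<phi> z [^]\<^bsub>C\<^esub> m" if "z \<in> carrier K" for z
    using y that by (simp add: h.hom_nat_pow)
  have "(\<exists>z\<in>carrier K. x = y \<otimes>\<^bsub>K\<^esub> z [^]\<^bsub>K\<^esub> m) \<longleftrightarrow>
        (\<exists>z\<in>carrier K. \<phi> x = \<phi> y \<otimes>\<^bsub>C\<^esub> \<phi> z [^]\<^bsub>C\<^esub> m)"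
  proof (rule bex_cong[OF refl])
    fix z assume z: "z \<in> carrier K"
    have "y \<otimes>\<^bsub>K\<^esub> z [^]\<^bsub>K\<^esub> m \<in> carrier K" using y z by simp
    from inj_on_eq_iff[OF inj x this]
    show "x = y \<otimes>\<^bsub>K\<^esub> z [^]\<^bsub>K\<^esub> m \<longleftrightarrow> \<phi> x = \<phi> y \<otimes>\<^bsub>C\<^esub> \<phi> z [^]\<^bsub>C\<^esub> m"
      unfolding image[OF z] by (rule sym)
  qed
  also have "\<dots> \<longleftrightarrow> (\<exists>z'\<in>carrier C. \<phi> x = \<phi> y \<otimes>\<^bsub>C\<^esub> z' [^]\<^bsub>C\<^esub> m)"
    unfolding surj[symmetric] by simp
  finally show ?thesis using x y by (auto simp: pow_coset_rel_def)
qed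

lemma card_pow_coset_quotient_transfer:
  assumes K: "group K" and C: "group C" and \<phi>: "\<phi> \<in> iso K C"
    and fibres: "\<And>x y. x \<in> carrier C \<Longrightarrow> y \<in> carrier C \<Longrightarrow> (x, y) \<in> pow_coset_rel C m \<longleftrightarrow> g x = g y"
  shows "card (carrier K // pow_coset_rel K m) = card (g ` carrier C)"
proof -
  have surj: "\<phi> ` carrier K = carrier C" using \<phi> by (simp add: iso_iff)
  have "card (carrier K // pow_coset_rel K m) = card ((g \<circ> \<phi>) ` carrier K)"
  proof (rule card_quotient_by_fibres)
    show "pow_coset_rel K m \<subseteq> carrier K \<times> carrier K" by (auto simp: pow_coset_rel_def)
    fix x y assume x: "x \<in> carrier K" and y: "y \<in> carrier K"
    then have "\<phi> x \<in> carrier C" "\<phi> y \<in> carrier C" using surj by blast+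
    then show "(x, y) \<in> pow_coset_rel K m \<longleftrightarrow> (g \<circ> \<phi>) x = (g \<circ> \<phi>) y"
      using pow_coset_rel_iso[OF K C \<phi> x y] fibres by simp
  qed
  also have "(g \<circ> \<phi>) ` carrier K = g ` carrier C" using surj by (metis image_comp)
  finally show ?thesis .
qed

lemma nat_pow_product_group:
  assumes "\<And>i. i \<in> I \<Longrightarrow> group (G i)" and z: "z \<in> carrier (product_group I G)"
  shows "z [^]\<^bsub>product_group I G\<^esub> (k::nat) = (\<lambda>i\<in>I. z i [^]\<^bsub>G i\<^esub> k)"
  by (induction k) (use z in \<open>auto intro!: restrict_ext\<close>)

lemma Zmod_product_mult_pow:
  fixes n :: "'a \<Rightarrow> nat"
  assumes z: "z \<in> carrier (product_group A (\<lambda>v. integer_mod_group (n v)))"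
  shows "y \<otimes>\<^bsub>product_group A (\<lambda>v. integer_mod_group (n v))\<^esub>
           z [^]\<^bsub>product_group A (\<lambda>v. integer_mod_group (n v))\<^esub> m =
         (\<lambda>v\<in>A. (y v + int m * z v) mod int (n v))"
  using nat_pow_product_group[of A, OF _ z] z by (auto simp: mod_add_right_eq intro!: restrict_ext)

(* In Z/nZ, x lies in y + m (Z/nZ) iff x and y agree modulo gcd(m, n) (Bezout). *)
lemma integer_mod_group_pow_coset:
  fixes x y :: int
  assumes m: "m > 0" and x: "x \<in> carrier (integer_mod_group n)"
  shows "(\<exists>z\<in>carrier (integer_mod_group n). x = (y + int m * z) mod int n) \<longleftrightarrow>
         x mod int (gcd m n) = y mod int (gcd m n)"
proof -
  define d where "d = int (gcd m n)"
  have dm: "d dvd int m" and dn: "d dvd int n" unfolding d_def by simp_all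
  have xn: "x mod int n = x"
    using x by (cases "n = 0") (auto simp: carrier_integer_mod_group)
  show ?thesis
  proof
    assume "\<exists>z\<in>carrier (integer_mod_group n). x = (y + int m * z) mod int n"
    then obtain z where z: "x = (y + int m * z) mod int n" by blast
    obtain c where c: "int m = d * c" using dm by blast
    have "x mod d = (y + d * (c * z)) mod d"
      using z dn c by (simp add: mod_mod_cancel mult.assoc)
    then show "x mod int (gcd m n) = y mod int (gcd m n)" unfolding d_def by simp
  next
    assume "x mod int (gcd m n) = y mod int (gcd m n)"
    then obtain k where k: "x - y = d * k" unfolding d_def by (auto simp: mod_eq_dvd_iff elim: dvdE)
    have "\<exists>u w. u * int m + w * int n = d"
      unfolding d_def using bezout_int[of "int m" "int n"] by (simp add: gcd_int_def)
    then obtain u w where uw: "d = u * int m + w * int n" by metis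
    define z where "z = (k * u) mod int n"
    have "z \<in> carrier (integer_mod_group n)" unfolding z_def by (auto simp: carrier_integer_mod_group)
    moreover have "(y + int m * z) mod int n = (x + int n * (- (k * w))) mod int n"
    proof -
      have "(y + int m * z) mod int n = (y + int m * (k * u)) mod int n"
        unfolding z_def by (metis mod_add_right_eq mod_mult_right_eq)
      also have "y + int m * (k * u) = x + int n * (- (k * w))" using k uw by (simp add: algebra_simps)
      finally show ?thesis .
    qed
    ultimately show "\<exists>z\<in>carrier (integer_mod_group n). x = (y + int m * z) mod int n"
      using xn by (metis mod_mult_self2 mult.commute)
  qed
qed

lemma pow_coset_rel_Zmod_product:
  fixes n :: "'a \<Rightarrow> nat" and A :: "'a set"
  defines "C \<equiv> product_group A (\<lambda>v. integer_mod_group (n v))"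
  assumes m: "m > 0" and x: "x \<in> carrier C" and y: "y \<in> carrier C"
  shows "(x, y) \<in> pow_coset_rel C m \<longleftrightarrow>
         (\<lambda>v\<in>A. x v mod int (gcd m (n v))) = (\<lambda>v\<in>A. y v mod int (gcd m (n v)))"
proof -
  have xv: "\<And>v. v \<in> A \<Longrightarrow> x v \<in> carrier (integer_mod_group (n v))"
    using x by (auto simp: C_def PiE_iff)
  have "x \<in> extensional A" using x by (simp add: C_def PiE_iff)
  then have coordinatewise:
    "x = y \<otimes>\<^bsub>C\<^esub> z [^]\<^bsub>C\<^esub> m \<longleftrightarrow> (\<forall>v\<in>A. x v = (y v + int m * z v) mod int (n v))"
    if "z \<in> carrier C" for z
    using Zmod_product_mult_pow[OF that[unfolded C_def]] unfolding C_def by (auto intro: extensionalityI)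
  have "(x, y) \<in> pow_coset_rel C m \<longleftrightarrow>
        (\<exists>z\<in>carrier C. \<forall>v\<in>A. x v = (y v + int m * z v) mod int (n v))"
    using x y coordinatewise by (auto simp: pow_coset_rel_def)
  also have "\<dots> \<longleftrightarrow> (\<forall>v\<in>A. \<exists>z\<in>carrier (integer_mod_group (n v)). x v = (y v + int m * z) mod int (n v))"
  proof
    assume "\<forall>v\<in>A. \<exists>z\<in>carrier (integer_mod_group (n v)). x v = (y v + int m * z) mod int (n v)"
    then obtain z where "\<And>v. v \<in> A \<Longrightarrow> z v \<in> carrier (integer_mod_group (n v)) \<and>
                                        x v = (y v + int m * z v) mod int (n v)" by metis
    then show "\<exists>z\<in>carrier C. \<forall>v\<in>A. x v = (y v + int m * z v) mod int (n v)"
      by (intro bexI[of _ "restrict z A"]) (auto simp: C_def)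
  next
    assume "\<exists>z\<in>carrier C. \<forall>v\<in>A. x v = (y v + int m * z v) mod int (n v)"
    then obtain z where z: "z \<in> carrier C" and eq: "\<forall>v\<in>A. x v = (y v + int m * z v) mod int (n v)"
      by blast
    have "\<And>v. v \<in> A \<Longrightarrow> z v \<in> carrier (integer_mod_group (n v))" using z by (simp add: C_def PiE_iff)
    then show "\<forall>v\<in>A. \<exists>z\<in>carrier (integer_mod_group (n v)). x v = (y v + int m * z) mod int (n v)"
      using eq by blast
  qed
  also have "\<dots> \<longleftrightarrow> (\<forall>v\<in>A. x v mod int (gcd m (n v)) = y v mod int (gcd m (n v)))"
    using integer_mod_group_pow_coset[OF m xv] by blast
  also have "\<dots> \<longleftrightarrow> (\<lambda>v\<in>A. x v mod int (gcd m (n v))) = (\<lambda>v\<in>A. y v mod int (gcd m (n v)))"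
    by (simp add: restrict_def fun_eq_iff Ball_def)
  finally show ?thesis .
qed

lemma Zmod_product_residues:
  fixes n :: "'a \<Rightarrow> nat"
  assumes m: "m > 0"
  shows "(\<lambda>x. \<lambda>v\<in>A. x v mod int (gcd m (n v))) ` carrier (product_group A (\<lambda>v. integer_mod_group (n v)))
         = (\<Pi>\<^sub>E v\<in>A. {0..<int (gcd m (n v))})"
proof
  show "(\<lambda>x. \<lambda>v\<in>A. x v mod int (gcd m (n v))) ` carrier (product_group A (\<lambda>v. integer_mod_group (n v)))
        \<subseteq> (\<Pi>\<^sub>E v\<in>A. {0..<int (gcd m (n v))})"
    using m by (auto simp: PiE_iff)
  show "(\<Pi>\<^sub>E v\<in>A. {0..<int (gcd m (n v))}) \<subseteq>
        (\<lambda>x. \<lambda>v\<in>A. x v mod int (gcd m (n v))) ` carrier (product_group A (\<lambda>v. integer_mod_group (n v)))"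
  proof
    fix t assume t: "t \<in> (\<Pi>\<^sub>E v\<in>A. {0..<int (gcd m (n v))})"
    have "t v \<in> carrier (integer_mod_group (n v))" if "v \<in> A" for v
    proof (cases "n v = 0")
      case False
      have "0 \<le> t v" "t v < int (gcd m (n v))" using t that by (auto simp: PiE_iff)
      moreover have "int (gcd m (n v)) \<le> int (n v)" using False by simp
      ultimately have "0 \<le> t v \<and> t v < int (n v)" by linarith
      then show ?thesis using False by (simp add: carrier_integer_mod_group)
    qed (simp add: carrier_integer_mod_group)
    then have "t \<in> carrier (product_group A (\<lambda>v. integer_mod_group (n v)))"
      using t by (simp add: PiE_iff)
    moreover have "(\<lambda>v\<in>A. t v mod int (gcd m (n v))) = t"
      using t by (auto simp: PiE_iff intro!: extensionalityI[of _ A])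
    ultimately show "t \<in> (\<lambda>x. \<lambda>v\<in>A. x v mod int (gcd m (n v))) `
                         carrier (product_group A (\<lambda>v. integer_mod_group (n v)))"
      by (simp add: rev_image_eqI)
  qed
qed

lemma card_pow_coset_quotient_Zmod_product:
  fixes n :: "'a \<Rightarrow> nat"
  assumes K: "group K" and A: "finite A" and m: "m > 0"
    and \<phi>: "\<phi> \<in> iso K (product_group A (\<lambda>v. integer_mod_group (n v)))"
  shows "card (carrier K // pow_coset_rel K m) = (\<Prod>v\<in>A. gcd m (n v))"
proof -
  have "card (carrier K // pow_coset_rel K m) =
        card ((\<lambda>x. \<lambda>v\<in>A. x v mod int (gcd m (n v))) ` carrier (product_group A (\<lambda>v. integer_mod_group (n v))))"
    by (rule card_pow_coset_quotient_transfer[OF K _ \<phi>]) (simp_all add: pow_coset_rel_Zmod_product[OF m])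
  also have "\<dots> = (\<Prod>v\<in>A. gcd m (n v))"
    unfolding Zmod_product_residues[OF m] using A by (simp add: card_PiE)
  finally show ?thesis .
qed

(* Orders of directly-indecomposable cyclic groups, with 0 standing for the infinite cyclic group. *)
definition prime_power_or_zero :: "nat \<Rightarrow> bool" where
  "prime_power_or_zero x \<longleftrightarrow> x = 0 \<or> (\<exists>p k. Factorial_Ring.prime p \<and> k \<ge> 1 \<and> x = p ^ k)"

lemma dir_indec_cyclic_card: "dir_indec_cyclic K \<Longrightarrow> prime_power_or_zero (card (carrier K))"
  unfolding dir_indec_cyclic_def prime_power_or_zero_def by auto

(* The exponent of p in gcd(p^j, x): the p-adic valuation of x capped at j
   (x = 0 has infinite valuation). *)
definition capped_valuation :: "nat \<Rightarrow> nat \<Rightarrow> nat \<Rightarrow> nat" where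
  "capped_valuation p j x = (if x = 0 then j else min j (multiplicity p x))"

lemma gcd_prime_power_capped:
  assumes p: "Factorial_Ring.prime p" and x: "prime_power_or_zero x"
  shows "gcd (p ^ j) x = p ^ capped_valuation p j x"
proof (cases "x = 0")
  case True
  then show ?thesis by (simp add: capped_valuation_def)
next
  case False
  then obtain q k where q: "Factorial_Ring.prime q" and k: "k \<ge> 1" and x: "x = q ^ k"
    using x by (auto simp: prime_power_or_zero_def)
  show ?thesis
  proof (cases "q = p")
    case True
    have "gcd (p ^ j) (p ^ k) = p ^ min j k"
      by (cases "j \<le> k") (simp_all add: le_imp_power_dvd gcd_nat.absorb1 gcd_nat.absorb2 min_def)
    then show ?thesis using True x p False by (simp add: capped_valuation_def prime_imp_prime_elem)
  next
    case False
    then have "\<not> p dvd x" using q p x k prime_dvd_power_iff[of p k q] primes_dvd_imp_eq by auto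
    then have "multiplicity p x = 0" by (rule not_dvd_imp_multiplicity_0)
    moreover have "coprime (p ^ j) x" using q p x False by (simp add: primes_coprime)
    ultimately show ?thesis using \<open>x \<noteq> 0\<close> by (simp add: capped_valuation_def)
  qed
qed

definition valuation_count :: "'a set \<Rightarrow> ('a \<Rightarrow> nat) \<Rightarrow> nat \<Rightarrow> nat \<Rightarrow> nat" where
  "valuation_count A n p j = card {v\<in>A. n v = 0 \<or> j \<le> multiplicity p (n v)}"

lemma sum_capped_valuation_Suc:
  assumes "finite A"
  shows "(\<Sum>v\<in>A. capped_valuation p (Suc j) (n v)) =
         (\<Sum>v\<in>A. capped_valuation p j (n v)) + valuation_count A n p (Suc j)"
proof -
  have "capped_valuation p (Suc j) x =
        capped_valuation p j x + (if x = 0 \<or> Suc j \<le> multiplicity p x then 1 else 0)" for x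
    by (auto simp: capped_valuation_def)
  then show ?thesis using assms by (simp add: sum.distrib valuation_count_def sum.If_cases Int_def)
qed

(* Taking m = p^j, equal products of gcd's determine the valuation counts. *)
lemma valuation_count_eq:
  fixes nA :: "'a \<Rightarrow> nat" and nB :: "'b \<Rightarrow> nat"
  assumes A: "finite A" and B: "finite B"
    and ppA: "\<forall>v\<in>A. prime_power_or_zero (nA v)" and ppB: "\<forall>w\<in>B. prime_power_or_zero (nB w)"
    and eq: "\<forall>m>0. (\<Prod>v\<in>A. gcd m (nA v)) = (\<Prod>w\<in>B. gcd m (nB w))"
    and p: "Factorial_Ring.prime p"
  shows "valuation_count A nA p (Suc j) = valuation_count B nB p (Suc j)"
proof -
  have sums: "(\<Sum>v\<in>A. capped_valuation p i (nA v)) = (\<Sum>w\<in>B. capped_valuation p i (nB w))" for i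
  proof -
    have "p ^ (\<Sum>v\<in>A. capped_valuation p i (nA v)) = (\<Prod>v\<in>A. gcd (p ^ i) (nA v))"
      using ppA gcd_prime_power_capped[OF p] by (simp add: power_sum)
    also have "\<dots> = (\<Prod>w\<in>B. gcd (p ^ i) (nB w))"
      using eq p by (simp add: prime_gt_0_nat)
    also have "\<dots> = p ^ (\<Sum>w\<in>B. capped_valuation p i (nB w))"
      using ppB gcd_prime_power_capped[OF p] by (simp add: power_sum)
    finally show ?thesis using p prime_gt_1_nat power_inject_exp by blast
  qed
  show ?thesis
    using sums[of j] sums[of "Suc j"] sum_capped_valuation_Suc[OF A] sum_capped_valuation_Suc[OF B]
    by simp
qed

(* Valuations are small, so for a large cap J only the zero values reach valuation J. *)
lemma multiplicity_less_self:
  fixes x :: nat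
  assumes p: "Factorial_Ring.prime p" and x: "x > 0"
  shows "multiplicity p x < x"
proof -
  have "multiplicity p x < 2 ^ multiplicity p x" by (rule less_exp)
  also have "\<dots> \<le> p ^ multiplicity p x" using prime_ge_2_nat[OF p] by (simp add: power_mono)
  also have "\<dots> \<le> x" using x by (simp add: dvd_imp_le multiplicity_dvd)
  finally show ?thesis .
qed

lemma valuation_count_beyond:
  assumes "\<forall>v\<in>A. n v < J"
  shows "valuation_count A n 2 J = card {v\<in>A. n v = 0}"
proof -
  have "\<not> J \<le> multiplicity 2 (n v)" if "v \<in> A" "n v > 0" for v
    using multiplicity_less_self[of 2 "n v"] assms that by auto
  then have "{v\<in>A. n v = 0 \<or> J \<le> multiplicity 2 (n v)} = {v\<in>A. n v = 0}" by auto
  then show ?thesis by (simp add: valuation_count_def)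
qed

lemma prime_power_or_zero_eq_iff:
  assumes x: "prime_power_or_zero x" and p: "Factorial_Ring.prime p" and k: "k \<ge> 1"
  shows "x = p ^ k \<longleftrightarrow> x \<noteq> 0 \<and> multiplicity p x = k"
proof
  assume "x \<noteq> 0 \<and> multiplicity p x = k"
  then obtain q l where q: "Factorial_Ring.prime q" and l: "l \<ge> 1" and xq: "x = q ^ l"
    and mk: "multiplicity p x = k"
    using x by (auto simp: prime_power_or_zero_def)
  have "p dvd x" using mk k not_dvd_imp_multiplicity_0[of p x] by auto
  then have "p = q" using q p xq l prime_dvd_power_iff[of p l q] primes_dvd_imp_eq by auto
  then show "x = p ^ k" using mk q xq by (simp add: prime_imp_prime_elem)
qed (use p in \<open>simp add: prime_imp_prime_elem\<close>)

lemma prime_power_count: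
  assumes A: "finite A" and pp: "\<forall>v\<in>A. prime_power_or_zero (n v)"
    and p: "Factorial_Ring.prime p" and k: "k \<ge> 1"
  shows "card {v\<in>A. n v = p ^ k} = valuation_count A n p k - valuation_count A n p (Suc k)"
proof -
  have "\<And>v. v \<in> A \<Longrightarrow> n v = p ^ k \<longleftrightarrow> n v \<noteq> 0 \<and> multiplicity p (n v) = k"
    using prime_power_or_zero_eq_iff[OF _ p k] pp by blast
  then have "{v\<in>A. n v = p ^ k} = {v\<in>A. n v \<noteq> 0 \<and> multiplicity p (n v) = k}"
    by (intro Collect_cong) blast
  also have "\<dots> =
        {v\<in>A. n v = 0 \<or> k \<le> multiplicity p (n v)} - {v\<in>A. n v = 0 \<or> Suc k \<le> multiplicity p (n v)}"
    by auto
  finally have "{v\<in>A. n v = p ^ k} =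
        {v\<in>A. n v = 0 \<or> k \<le> multiplicity p (n v)} - {v\<in>A. n v = 0 \<or> Suc k \<le> multiplicity p (n v)}" .
  moreover have "{v\<in>A. n v = 0 \<or> Suc k \<le> multiplicity p (n v)} \<subseteq> {v\<in>A. n v = 0 \<or> k \<le> multiplicity p (n v)}"
    by auto
  ultimately show ?thesis using A by (simp add: valuation_count_def card_Diff_subset)
qed

lemma prime_power_or_zero_counts_eq:
  fixes nA :: "'a \<Rightarrow> nat" and nB :: "'b \<Rightarrow> nat"
  assumes A: "finite A" and B: "finite B"
    and ppA: "\<forall>v\<in>A. prime_power_or_zero (nA v)" and ppB: "\<forall>w\<in>B. prime_power_or_zero (nB w)"
    and eq: "\<forall>m>0. (\<Prod>v\<in>A. gcd m (nA v)) = (\<Prod>w\<in>B. gcd m (nB w))"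
  shows "card {v\<in>A. nA v = t} = card {w\<in>B. nB w = t}"
proof -
  note counts = valuation_count_eq[OF A B ppA ppB eq]
  consider "t = 0" | "\<not> prime_power_or_zero t" | p k where "Factorial_Ring.prime p" "k \<ge> 1" "t = p ^ k"
    by (auto simp: prime_power_or_zero_def)
  then show ?thesis
  proof cases
    case 1
    define J where "J = Suc (sum nA A + sum nB B)"
    have "nA v \<le> sum nA A" if "v \<in> A" for v using A that by (intro member_le_sum) auto
    moreover have "nB w \<le> sum nB B" if "w \<in> B" for w using B that by (intro member_le_sum) auto
    ultimately have "\<forall>v\<in>A. nA v < J" and "\<forall>w\<in>B. nB w < J" unfolding J_def by force+
    then have "valuation_count A nA 2 J = card {v\<in>A. nA v = 0}"
      and "valuation_count B nB 2 J = card {w\<in>B. nB w = 0}"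
      by (simp_all add: valuation_count_beyond)
    moreover have "valuation_count A nA 2 J = valuation_count B nB 2 J"
      unfolding J_def by (rule counts[OF two_is_prime_nat])
    ultimately show ?thesis using 1 by simp
  next
    case 2
    then have none: "{v\<in>A. nA v = t} = {}" "{w\<in>B. nB w = t} = {}" using ppA ppB by auto
    show ?thesis unfolding none by simp
  next
    case (3 p k)
    then have "valuation_count A nA p k = valuation_count B nB p k"
      using counts[of p "k - 1"] by simp
    then show ?thesis using 3 counts[of p k] prime_power_count[OF A ppA] prime_power_count[OF B ppB] by simp
  qed
qed

lemma bij_betw_fibre_preserving:
  fixes f :: "'a \<Rightarrow> 'c" and g :: "'b \<Rightarrow> 'c"
  assumes A: "finite A" and B: "finite B"
    and counts: "\<And>t. card {a\<in>A. f a = t} = card {b\<in>B. g b = t}"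
  shows "\<exists>h. bij_betw h A B \<and> (\<forall>a\<in>A. g (h a) = f a)"
proof -
  have "\<forall>t. \<exists>h. bij_betw h {a\<in>A. f a = t} {b\<in>B. g b = t}"
    using A B counts by (intro allI finite_same_card_bij) auto
  then obtain hb where hb: "\<And>t. bij_betw (hb t) {a\<in>A. f a = t} {b\<in>B. g b = t}" by metis
  define h where "h a = hb (f a) a" for a
  have h_fibre: "h a \<in> B \<and> g (h a) = f a" if "a \<in> A" for a
    using bij_betwE[OF hb[of "f a"]] that unfolding h_def by blast
  have "inj_on h A"
  proof (rule inj_onI)
    fix a a' assume a: "a \<in> A" and a': "a' \<in> A" and eq: "h a = h a'"
    then have "f a = f a'" using h_fibre by metis
    then show "a = a'"
      using eq a a' bij_betw_imp_inj_on[OF hb[of "f a"]] unfolding h_def by (auto dest: inj_onD)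
  qed
  moreover have "B \<subseteq> h ` A"
  proof
    fix b assume "b \<in> B"
    then obtain a where a: "a \<in> A" "f a = g b" "b = hb (g b) a"
      using bij_betw_imp_surj_on[OF hb[of "g b"]] by blast
    then have "h a = b" unfolding h_def by simp
    then show "b \<in> h ` A" using a(1) by blast
  qed
  ultimately have "bij_betw h A B" using h_fibre by (auto simp: bij_betw_def)
  then show ?thesis using h_fibre by blast
qed

lemma product_iso_factor_bij:
  fixes G :: "'a \<Rightarrow> ('g, 'm) monoid_scheme" and H :: "'b \<Rightarrow> ('h, 'n) monoid_scheme"
  assumes A: "finite A" and B: "finite B"
    and G: "\<And>v. v \<in> A \<Longrightarrow> dir_indec_cyclic (G v)" and H: "\<And>w. w \<in> B \<Longrightarrow> dir_indec_cyclic (H w)"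
    and iso: "product_group A G \<cong> product_group B H"
  shows "\<exists>h. bij_betw h A B \<and> (\<forall>v\<in>A. G v \<cong> H (h v))"
proof -
  define nG where "nG v = card (carrier (G v))" for v
  define nH where "nH w = card (carrier (H w))" for w
  have grG: "\<And>v. v \<in> A \<Longrightarrow> group (G v)" and grH: "\<And>w. w \<in> B \<Longrightarrow> group (H w)"
    using G H by (auto simp: dir_indec_cyclic_def)
  have ZG: "\<And>v. v \<in> A \<Longrightarrow> integer_mod_group (nG v) \<cong> G v"
    unfolding nG_def using G by (intro cyclic_iso_integer_mod_group) (auto simp: dir_indec_cyclic_def)
  have ZH: "\<And>w. w \<in> B \<Longrightarrow> H w \<cong> integer_mod_group (nH w)"
    unfolding nH_def using H grH
    by (auto simp: dir_indec_cyclic_def intro: group.iso_sym[OF group_integer_mod_group] cyclic_iso_integer_mod_group)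
  have "product_group A (\<lambda>v. integer_mod_group (nG v)) \<cong> product_group A G"
    using ZG grG by (intro iso_product_groupI) auto
  also note iso
  also have "product_group B H \<cong> product_group B (\<lambda>w. integer_mod_group (nH w))"
    using ZH grH by (intro iso_product_groupI) auto
  finally obtain \<phi> where \<phi>: "\<phi> \<in> iso (product_group A (\<lambda>v. integer_mod_group (nG v)))
                                    (product_group B (\<lambda>w. integer_mod_group (nH w)))"
    by (auto simp: is_iso_def)
  have "\<forall>m>0. (\<Prod>v\<in>A. gcd m (nG v)) = (\<Prod>w\<in>B. gcd m (nH w))"
    using card_pow_coset_quotient_Zmod_product[OF _ A _ iso_set_refl]
          card_pow_coset_quotient_Zmod_product[OF _ B _ \<phi>] by simp
  then have "\<And>t. card {v\<in>A. nG v = t} = card {w\<in>B. nH w = t}"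
    unfolding nG_def nH_def
    by (intro prime_power_or_zero_counts_eq[OF A B]) (auto intro: dir_indec_cyclic_card G H)
  then obtain h where h: "bij_betw h A B" and orders: "\<forall>v\<in>A. nH (h v) = nG v"
    using bij_betw_fibre_preserving[OF A B] by blast
  have "G v \<cong> H (h v)" if v: "v \<in> A" for v
  proof -
    have "G v \<cong> integer_mod_group (nG v)" using group.iso_sym[OF group_integer_mod_group ZG[OF v]] .
    also have "\<dots> = integer_mod_group (nH (h v))" using orders v by simp
    also have "\<dots> \<cong> H (h v)"
      using group.iso_sym[OF grH ZH] bij_betwE[OF h] v by blast
    finally show ?thesis .
  qed
  then show ?thesis using h by blast
qed

lemma lg_iso_imp_T0_quotient_iso:
  assumes LG: "labeled_graph V E G" and LH: "labeled_graph W F H" and iso: "lg_iso V E G W F H"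
  shows "lg_iso (T0_verts V E) (T0_adj V E) (T0_labels G) (T0_verts W F) (T0_adj W F) (T0_labels H)"
proof -
  obtain f where f: "graph_iso V E W F f" and labels: "\<forall>u\<in>V. G u \<cong> H (f u)"
    using iso unfolding lg_iso_iff_graph_iso by blast
  have inj: "inj_on f V" and fV: "f ` V = W" using f by (auto simp: graph_iso_def bij_betw_def)
  have "T0_labels G A \<cong> T0_labels H (f ` A)" if A: "A \<in> T0_verts V E" for A
  proof -
    have AV: "A \<subseteq> V" using T0_verts_sub[OF A] .
    have "product_group A G \<cong> product_group A (\<lambda>a. H (f a))"
      using labels labeled_graphD(3)[OF LG] labeled_graphD(3)[OF LH] AV fV
      by (intro iso_product_groupI) auto
    also have "\<dots> \<cong> product_group (f ` A) H"
      using inj_on_subset[OF inj AV] by (rule product_group_reindex_iso)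
    finally show ?thesis unfolding T0_labels_def .
  qed
  then show ?thesis
    using graph_iso_T0_quotient[OF labeled_graphD(1)[OF LG] labeled_graphD(1)[OF LH] f]
    unfolding lg_iso_iff_graph_iso by blast
qed

lemma T0_quotient_iso_imp_lg_iso:
  assumes LG: "labeled_graph V E G" and LH: "labeled_graph W F H"
    and cycG: "\<forall>v\<in>V. dir_indec_cyclic (G v)" and cycH: "\<forall>w\<in>W. dir_indec_cyclic (H w)"
    and iso: "lg_iso (T0_verts V E) (T0_adj V E) (T0_labels G) (T0_verts W F) (T0_adj W F) (T0_labels H)"
  shows "lg_iso V E G W F H"
proof -
  obtain \<Phi> where \<Phi>: "graph_iso (T0_verts V E) (T0_adj V E) (T0_verts W F) (T0_adj W F) \<Phi>"
    and labels: "\<forall>A\<in>T0_verts V E. product_group A G \<cong> product_group (\<Phi> A) H"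
    using iso unfolding lg_iso_iff_graph_iso T0_labels_def by blast
  have "\<exists>h. bij_betw h A (\<Phi> A) \<and> (\<forall>v\<in>A. G v \<cong> H (h v))" if A: "A \<in> T0_verts V E" for A
  proof (rule product_iso_factor_bij)
    have "\<Phi> A \<in> T0_verts W F" using \<Phi> A by (auto simp: graph_iso_def dest: bij_betwE)
    then have "\<Phi> A \<subseteq> W" by (rule T0_verts_sub)
    then show "finite (\<Phi> A)" and "\<And>w. w \<in> \<Phi> A \<Longrightarrow> dir_indec_cyclic (H w)"
      using labeled_graphD(2)[OF LH] cycH finite_subset by blast+
    have "A \<subseteq> V" using A by (rule T0_verts_sub)
    then show "finite A" and "\<And>v. v \<in> A \<Longrightarrow> dir_indec_cyclic (G v)"
      using labeled_graphD(2)[OF LG] cycG finite_subset by blast+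
    show "product_group A G \<cong> product_group (\<Phi> A) H" using labels A by blast
  qed
  then obtain h where h: "\<And>A. A \<in> T0_verts V E \<Longrightarrow> bij_betw (h A) A (\<Phi> A) \<and> (\<forall>v\<in>A. G v \<cong> H (h A v))"
    by metis
  have "graph_iso V E W F (\<lambda>v. h (T0_class V E v) v)"
    using h by (intro glued_map_graph_iso[OF labeled_graphD(1)[OF LG] labeled_graphD(1)[OF LH] \<Phi>]) blast
  moreover have "G v \<cong> H (h (T0_class V E v) v)" if "v \<in> V" for v
    using h[of "T0_class V E v"] T0_class_mem[OF that] that by (auto simp: T0_verts_def)
  ultimately show ?thesis unfolding lg_iso_iff_graph_iso by blast
qed

theorem lemma3p4:
  fixes V :: "'a set" and E :: "'a \<Rightarrow> 'a \<Rightarrow> bool" and G :: "'a \<Rightarrow> ('g, 'm) monoid_scheme"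
    and W :: "'b set" and F :: "'b \<Rightarrow> 'b \<Rightarrow> bool" and H :: "'b \<Rightarrow> ('h, 'n) monoid_scheme"
  assumes "labeled_graph V E G" and "labeled_graph W F H"
    and "\<forall>v\<in>V. dir_indec_cyclic (G v)" and "\<forall>w\<in>W. dir_indec_cyclic (H w)"
  shows "lg_iso V E G W F H \<longleftrightarrow>
         lg_iso (T0_verts V E) (T0_adj V E) (T0_labels G) (T0_verts W F) (T0_adj W F) (T0_labels H)"
  using lg_iso_imp_T0_quotient_iso[OF assms(1,2)] T0_quotient_iso_imp_lg_iso[OF assms] by blast

end
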